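(* Let $(\mathbb{X},\oplus,\otimes,\mathbb{0},\mathbb{1})$ be a linearly ordered, algebraically complete idempotent semifield, and let $\bm{A}\in\mathbb{X}^{n\times n}$ be a matrix such that the matrix $\bm{B}=\bm{A}\oplus\bm{A}^{-}$ has no zero entries. Let $\mu$ be the spectral radius of $\bm{B}$ and $\bm{B}_{\mu}=\mu^{-1}\bm{B}$. Consider the problem of minimizing $d(\bm{A},\bm{x}\bm{x}^{-})$ over all regular vectors $\bm{x}=(x_j)\in\mathbb{X}^{n}$ (i.e. $x_j>\mathbb{0}$ for $j=1,\ldots,n$). Then the minimum value of this problem equals $\mu$, and the set of all solutions is $\{\bm{x}=\bm{B}_{\mu}^{\ast}\bm{u} : \bm{u}\in\mathbb{X}^n,\ \bm{u}\neq\bm{0}\}$.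
   Context: An idempotent semifield is a set $\mathbb{X}$ with associative, commutative operations $\oplus$ (addition) and $\otimes$ (multiplication, usually omitted in writing) with neutral elements $\mathbb{0}$ and $\mathbb{1}$, multiplication distributing over addition, idempotent addition ($x\oplus x=x$), and every nonzero $x$ having an inverse $x^{-1}$ with $xx^{-1}=\mathbb{1}$. It is assumed linearly ordered by the order $x\le y \iff x\oplus y=y$, and algebraically complete: $x^p=a$ is solvable for every $a$ and integer $p>0$, so rational powers are defined. (Examples: $(\mathbb{R}_{>0}\cup\{0\},\max,\times,0,1)$ and $(\mathbb{R}\cup\{-\infty\},\max,+,-\infty,0)$.) Matrix and vector addition and multiplication are defined by the usual formulas with $\oplus,\otimes$ in place of $+,\times$; $\bm{0}$ is the zero vector; a vector is regular if it has no zero entries. For a nonzero column vector $\bm{x}=(x_i)$, $\bm{x}^{-}$ is the row vector with entries $x_i^{-1}$ if $x_i\ne\mathbb{0}$ and $\mathbb{0}$ otherwise. For a nonzero matrix $\bm{A}=(a_{ij})$, $\bm{A}^{-}=(a^{-}_{ij})$ with $a^{-}_{ij}=a_{ji}^{-1}$ if $a_{ji}\neq\mathbb{0}$ and $\mathbb{0}$ otherwise. The trace is $\mathrm{tr}\,\bm{A}=a_{11}\oplus\cdots\oplus a_{nn}$. The distance between square matrices is $d(\bm{A},\bm{B})=\mathrm{tr}(\bm{B}^{-}\bm{A})\oplus\mathrm{tr}(\bm{A}^{-}\bm{B})$. $\bm{I}$ is the identity matrix ($\mathbb{1}$ on the diagonal, $\mathbb{0}$ elsewhere), $\bm{A}^0=\bm{I}$,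 $\bm{A}^p=\bm{A}^{p-1}\bm{A}$. The spectral radius of $\bm{A}\in\mathbb{X}^{n\times n}$ is $\lambda=\bigoplus_{k=1}^{n}\mathrm{tr}^{1/k}(\bm{A}^k)=\bigoplus_{k=1}^{n}\bigoplus_{1\le i_1,\ldots,i_k\le n}(a_{i_1i_2}a_{i_2i_3}\cdots a_{i_ki_1})^{1/k}$. For a square matrix $\bm{M}$ of order $n$, $\bm{M}^{\ast}=\bm{I}\oplus\bm{M}\oplus\cdots\oplus\bm{M}^{n-1}$. *)

theory Defs
  imports Main
begin

text \<open>Linearly ordered, algebraically complete idempotent semifield.
  Addition is the idempotent semiring addition (written +), multiplication is *,
  the order is the linear order induced by addition.\<close>

class idem_semifield = comm_semiring_1 + inverse + linorder +
  assumes add_idem: "x + x = x"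
  and le_iff_add: "x \<le> y \<longleftrightarrow> x + y = y"
  and zero_neq_one_sf: "(0::'a) \<noteq> 1"
  and right_inverse_sf: "x \<noteq> 0 \<Longrightarrow> x * inverse x = 1"
  and alg_complete: "0 < p \<Longrightarrow> \<exists>y. y ^ p = a"

type_synonym ('a, 'n) sqmat = "'n \<Rightarrow> 'n \<Rightarrow> 'a"
type_synonym ('a, 'n) vect = "'n \<Rightarrow> 'a"

definition mroot :: "nat \<Rightarrow> 'a::idem_semifield \<Rightarrow> 'a" where
  "mroot k a = (THE y. y ^ k = a)"

definition mmul :: "('a::idem_semifield, 'n::finite) sqmat \<Rightarrow> ('a, 'n) sqmat \<Rightarrow> ('a, 'n) sqmat" where
  "mmul A B = (\<lambda>i j. \<Sum>k\<in>UNIV. A i k * B k j)"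

definition mvmul :: "('a::idem_semifield, 'n::finite) sqmat \<Rightarrow> ('a, 'n) vect \<Rightarrow> ('a, 'n) vect" where
  "mvmul A x = (\<lambda>i. \<Sum>k\<in>UNIV. A i k * x k)"

definition madd :: "('a::idem_semifield, 'n) sqmat \<Rightarrow> ('a, 'n) sqmat \<Rightarrow> ('a, 'n) sqmat" where
  "madd A B = (\<lambda>i j. A i j + B i j)"

definition msmul :: "'a::idem_semifield \<Rightarrow> ('a, 'n) sqmat \<Rightarrow> ('a, 'n) sqmat" where
  "msmul c A = (\<lambda>i j. c * A i j)"

definition mid :: "('a::idem_semifield, 'n) sqmat" where
  "mid = (\<lambda>i j. if i = j then 1 else 0)"

primrec mpow :: "('a::idem_semifield, 'n::finite) sqmat \<Rightarrow> nat \<Rightarrow> ('a, 'n) sqmat" where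
  "mpow A 0 = mid"
| "mpow A (Suc p) = mmul (mpow A p) A"

definition mtr :: "('a::idem_semifield, 'n::finite) sqmat \<Rightarrow> 'a" where
  "mtr A = (\<Sum>i\<in>UNIV. A i i)"

definition mconj :: "('a::idem_semifield, 'n) sqmat \<Rightarrow> ('a, 'n) sqmat" where
  "mconj A = (\<lambda>i j. if A j i \<noteq> 0 then inverse (A j i) else 0)"

definition vconj :: "('a::idem_semifield, 'n) vect \<Rightarrow> ('a, 'n) vect" where
  "vconj x = (\<lambda>j. if x j \<noteq> 0 then inverse (x j) else 0)"

definition vouter :: "('a::idem_semifield, 'n) vect \<Rightarrow> ('a, 'n) vect \<Rightarrow> ('a, 'n) sqmat" where
  "vouter x y = (\<lambda>i j. x i * y j)"

definition mdist :: "('a::idem_semifield, 'n::finite) sqmat \<Rightarrow> ('a, 'n) sqmat \<Rightarrow> 'a" where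
  "mdist A B = mtr (mmul (mconj B) A) + mtr (mmul (mconj A) B)"

definition spec_rad :: "('a::idem_semifield, 'n::finite) sqmat \<Rightarrow> 'a" where
  "spec_rad A = (\<Sum>k\<in>{1..card (UNIV::'n set)}. mroot k (mtr (mpow A k)))"

definition mstar :: "('a::idem_semifield, 'n::finite) sqmat \<Rightarrow> ('a, 'n) sqmat" where
  "mstar M = (\<lambda>i j. \<Sum>p\<in>{..<card (UNIV::'n set)}. mpow M p i j)"

definition regular :: "('a::idem_semifield, 'n) vect \<Rightarrow> bool" where
  "regular x \<longleftrightarrow> (\<forall>j. x j \<noteq> 0)"

end

(*
  For regular x the distance d(A, x x\<^sup>-) equals x\<^sup>- B x = \<Oplus>\<^sub>i\<^sub>j x\<^sub>i\<^sup>-\<^sup>1 b\<^sub>i\<^sub>j x\<^sub>j with B = A \<oplus> A\<^sup>-.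
  Conjugating by the diagonal matrix of x shows that every entry of x\<^sup>- B\<^sup>k x, in particular
  every cycle weight of length k, is at most (x\<^sup>- B x)\<^sup>k, whence \<mu> \<le> x\<^sup>- B x.  Moreover
  x\<^sup>- B x \<le> \<mu> holds iff B\<^sub>\<mu> x \<le> x.  Since B\<^sub>\<mu> has spectral radius 1, no closed walk of B\<^sub>\<mu> is
  heavier than 1, so cutting out cycles bounds every power of B\<^sub>\<mu> by B\<^sub>\<mu>\<^sup>*; hence B\<^sub>\<mu> B\<^sub>\<mu>\<^sup>* \<le> B\<^sub>\<mu>\<^sup>*
  and the regular solutions of B\<^sub>\<mu> x \<le> x are exactly the vectors B\<^sub>\<mu>\<^sup>* u with u \<noteq> 0.
*)

theory Submission
  imports Defs
begin

section \<open>Arithmetic of an idempotent semifield\<close>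

context idem_semifield
begin

lemma add_eq_max: "x + y = max x y"
proof (cases "x \<le> y")
  case True
  thus ?thesis using le_iff_add by (simp add: max_def)
next
  case False
  hence "y + x = x" using le_iff_add[of y x] by auto
  thus ?thesis using False by (simp add: max_def add.commute)
qed

subclass canonically_ordered_monoid_add
proof
  fix a b :: 'a
  show "a \<le> b \<longleftrightarrow> (\<exists>c. b = a + c)"
    by (auto simp: add_eq_max intro: exI[of _ b])
qed

subclass ordered_comm_semiring
  by standard (metis le_iff_add distrib_left)

subclass ordered_semiring_1
proof
  show "0 < (1::'a)" using zero_le[of 1] zero_neq_one by (simp add: order.strict_iff_order)
qed

lemma left_inverse_sf: "x \<noteq> 0 \<Longrightarrow> inverse x * x = 1"
  using right_inverse_sf by (simp add: mult.commute)

subclass semiring_1_no_zero_divisors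
proof
  fix a b :: 'a
  assume "a \<noteq> 0" "b \<noteq> 0"
  show "a * b \<noteq> 0"
  proof
    assume "a * b = 0"
    hence "inverse a * a * b = 0" by (simp add: mult.assoc)
    thus False using left_inverse_sf \<open>a \<noteq> 0\<close> \<open>b \<noteq> 0\<close> by simp
  qed
qed

lemma inverse_unique_sf: "x * y = 1 \<Longrightarrow> inverse x = y"
proof -
  assume xy: "x * y = 1"
  hence "x \<noteq> 0" by auto
  have "inverse x = inverse x * (x * y)" using xy by simp
  thus ?thesis using left_inverse_sf[OF \<open>x \<noteq> 0\<close>] by (simp add: mult.assoc[symmetric])
qed

lemma inverse_nonzero_sf: "x \<noteq> 0 \<Longrightarrow> inverse x \<noteq> 0"
proof
  assume "x \<noteq> 0" "inverse x = 0"
  hence "x * inverse x = 0" by simp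
  thus False using right_inverse_sf[OF \<open>x \<noteq> 0\<close>] by simp
qed

lemma inverse_mult_sf:
  assumes "a \<noteq> 0" "b \<noteq> 0"
  shows "inverse (a * b) = inverse a * inverse b"
proof (rule inverse_unique_sf)
  have "a * b * (inverse a * inverse b) = (a * inverse a) * (b * inverse b)" by (simp only: mult_ac)
  thus "a * b * (inverse a * inverse b) = 1" using assms right_inverse_sf by simp
qed

lemma inverse_inverse_sf: "a \<noteq> 0 \<Longrightarrow> inverse (inverse a) = a"
  by (rule inverse_unique_sf) (rule left_inverse_sf)

lemma le_mult_iff_inverse_le: "z \<noteq> 0 \<Longrightarrow> a \<le> z * b \<longleftrightarrow> inverse z * a \<le> b"
proof
  assume "z \<noteq> 0" "a \<le> z * b"
  hence "inverse z * a \<le> inverse z * z * b" by (simp add: mult_left_mono mult.assoc)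
  thus "inverse z * a \<le> b" using left_inverse_sf \<open>z \<noteq> 0\<close> by simp
next
  assume "z \<noteq> 0" "inverse z * a \<le> b"
  hence "z * inverse z * a \<le> z * b" by (simp add: mult_left_mono mult.assoc)
  thus "a \<le> z * b" using right_inverse_sf \<open>z \<noteq> 0\<close> by simp
qed

lemma power_strict_mono_sf: "a < b \<Longrightarrow> 0 < k \<Longrightarrow> a ^ k < b ^ k"
proof (induction k)
  case (Suc k)
  have nz: "b ^ k \<noteq> 0" using Suc.prems by (auto simp: power_not_zero)
  have "a * a ^ k \<le> a * b ^ k" using Suc.prems by (intro mult_left_mono power_mono) auto
  also have "a * b ^ k < b * b ^ k"
  proof -
    have "a * b ^ k \<le> b * b ^ k" using Suc.prems by (intro mult_right_mono) auto
    moreover have "a * b ^ k \<noteq> b * b ^ k"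
    proof
      assume "a * b ^ k = b * b ^ k"
      hence "a * (b ^ k * inverse (b ^ k)) = b * (b ^ k * inverse (b ^ k))" by (simp add: mult.assoc[symmetric])
      thus False using Suc.prems right_inverse_sf[OF nz] by simp
    qed
    ultimately show ?thesis by simp
  qed
  finally show ?case by simp
qed simp

lemma power_inject_sf:
  assumes "0 < k" "a ^ k = b ^ k"
  shows "a = b"
proof (rule ccontr)
  assume "a \<noteq> b"
  then consider "a < b" | "b < a" by (auto simp: neq_iff)
  thus False
    using power_strict_mono_sf[OF _ \<open>0 < k\<close>, of a b] power_strict_mono_sf[OF _ \<open>0 < k\<close>, of b a] assms(2)
    by cases auto
qed

lemma sum_le_iff: "finite S \<Longrightarrow> sum f S \<le> c \<longleftrightarrow> (\<forall>i\<in>S. f i \<le> c)"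
  by (induction S rule: finite_induct) (auto simp: add_eq_max)

lemma sum_attained: "finite S \<Longrightarrow> S \<noteq> {} \<Longrightarrow> \<exists>i\<in>S. sum f S = f i"
proof (induction S rule: finite_ne_induct)
  case (insert x F)
  then obtain i where i: "i \<in> F" "sum f F = f i" by blast
  have "sum f (insert x F) = max (f x) (f i)" using insert i by (simp add: add_eq_max)
  hence "sum f (insert x F) = f x \<or> sum f (insert x F) = f i" by (simp add: max_def)
  thus ?case
  proof
    assume "sum f (insert x F) = f x"
    thus ?case by (rule bexI) (rule insertI1)
  next
    assume "sum f (insert x F) = f i"
    thus ?case by (rule bexI) (rule insertI2[OF i(1)])
  qed
qed simp

end

lemma mroot_power:
  assumes "0 < k"
  shows "mroot k (a::'a::idem_semifield) ^ k = a"
proof -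
  obtain y where "y ^ k = a" using alg_complete[OF assms] by blast
  hence "\<exists>!y. y ^ k = a" using power_inject_sf[OF assms] by blast
  thus ?thesis unfolding mroot_def by (rule theI')
qed

lemma mroot_le_iff:
  assumes "0 < k"
  shows "mroot k (a::'a::idem_semifield) \<le> q \<longleftrightarrow> a \<le> q ^ k"
proof
  assume "mroot k a \<le> q"
  hence "mroot k a ^ k \<le> q ^ k" by (simp add: power_mono)
  thus "a \<le> q ^ k" by (simp only: mroot_power[OF assms])
next
  assume a: "a \<le> q ^ k"
  show "mroot k a \<le> q"
  proof (rule ccontr)
    assume "\<not> mroot k a \<le> q"
    hence "q ^ k < mroot k a ^ k" by (intro power_strict_mono_sf[OF _ assms]) simp
    hence "q ^ k < a" by (simp only: mroot_power[OF assms])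
    thus False using a by simp
  qed
qed

lemma mroot_mult_power:
  assumes "0 < k"
  shows "mroot k (c ^ k * a) = c * mroot k (a::'a::idem_semifield)"
proof (rule power_inject_sf[OF assms])
  show "mroot k (c ^ k * a) ^ k = (c * mroot k a) ^ k"
    by (simp only: mroot_power[OF assms] power_mult_distrib)
qed

section \<open>Matrix algebra\<close>

lemma mmul_assoc: "mmul (mmul A B) C = mmul A (mmul B (C::('a::idem_semifield,'n::finite) sqmat))"
proof (intro ext)
  fix i j
  have "mmul (mmul A B) C i j = (\<Sum>k\<in>UNIV. \<Sum>l\<in>UNIV. A i l * B l k * C k j)"
    unfolding mmul_def by (simp add: sum_distrib_right)
  also have "\<dots> = (\<Sum>l\<in>UNIV. \<Sum>k\<in>UNIV. A i l * B l k * C k j)" by (rule sum.swap)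
  also have "\<dots> = mmul A (mmul B C) i j"
    unfolding mmul_def by (simp add: sum_distrib_left mult.assoc)
  finally show "mmul (mmul A B) C i j = mmul A (mmul B C) i j" .
qed

lemma mmul_mid_left [simp]: "mmul mid A = (A::('a::idem_semifield,'n::finite) sqmat)"
proof (intro ext)
  fix i j
  have "mmul mid A i j = (\<Sum>k\<in>UNIV. if i = k then A k j else 0)"
    unfolding mmul_def mid_def by (rule sum.cong) auto
  thus "mmul mid A i j = A i j" by simp
qed

lemma mmul_mid_right [simp]: "mmul A mid = (A::('a::idem_semifield,'n::finite) sqmat)"
proof (intro ext)
  fix i j
  have "mmul A mid i j = (\<Sum>k\<in>UNIV. if k = j then A i k else 0)"
    unfolding mmul_def mid_def by (rule sum.cong) auto
  thus "mmul A mid i j = A i j" by simp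
qed

lemma mpow_Suc_left: "mpow C (Suc p) = mmul C (mpow (C::('a::idem_semifield,'n::finite) sqmat) p)"
proof (induction p)
  case (Suc p)
  have "mpow C (Suc (Suc p)) = mmul (mmul C (mpow C p)) C" using Suc by simp
  thus ?case by (simp add: mmul_assoc)
qed simp

lemma mvmul_mid [simp]: "mvmul mid x = (x::('a::idem_semifield,'n::finite) vect)"
proof
  fix i
  have "mvmul mid x i = (\<Sum>k\<in>UNIV. if i = k then x k else 0)"
    unfolding mvmul_def mid_def by (rule sum.cong) auto
  thus "mvmul mid x i = x i" by simp
qed

lemma mvmul_mmul: "mvmul (mmul A B) x = mvmul A (mvmul B (x::('a::idem_semifield,'n::finite) vect))"
proof (rule ext)
  fix i
  have "mvmul (mmul A B) x i = (\<Sum>k\<in>UNIV. \<Sum>l\<in>UNIV. A i l * B l k * x k)"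
    unfolding mmul_def mvmul_def by (simp add: sum_distrib_right)
  also have "\<dots> = (\<Sum>l\<in>UNIV. \<Sum>k\<in>UNIV. A i l * B l k * x k)" by (rule sum.swap)
  also have "\<dots> = mvmul A (mvmul B x) i"
    unfolding mvmul_def by (simp add: sum_distrib_left mult.assoc)
  finally show "mvmul (mmul A B) x i = mvmul A (mvmul B x) i" .
qed

lemma mvmul_mono:
  fixes M N :: "('a::idem_semifield,'n::finite) sqmat"
  assumes "\<And>k. M i k \<le> N i k" and "\<And>k. x k \<le> y k"
  shows "mvmul M x i \<le> mvmul N y i"
  unfolding mvmul_def using assms by (intro sum_mono mult_mono) auto

lemma mpow_msmul: "mpow (msmul c B) k = msmul (c ^ k) (mpow (B::('a::idem_semifield,'n::finite) sqmat) k)"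
  by (induction k) (auto simp: msmul_def mid_def mmul_def sum_distrib_left mult_ac intro!: ext)

lemma mtr_msmul: "mtr (msmul c (M::('a::idem_semifield,'n::finite) sqmat)) = c * mtr M"
  unfolding mtr_def msmul_def by (simp add: sum_distrib_left)

lemma spec_rad_msmul: "spec_rad (msmul c B) = c * spec_rad (B::('a::idem_semifield,'n::finite) sqmat)"
  unfolding spec_rad_def mpow_msmul mtr_msmul sum_distrib_left
  by (rule sum.cong) (simp_all add: mroot_mult_power)

lemma mtr_mpow_le_spec_rad_power:
  fixes C :: "('a::idem_semifield,'n::finite) sqmat"
  assumes "1 \<le> d" "d \<le> card (UNIV::'n set)"
  shows "mtr (mpow C d) \<le> spec_rad C ^ d"
proof -
  have "mroot d (mtr (mpow C d)) \<le> spec_rad C" unfolding spec_rad_def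
    by (rule member_le_sum) (use assms in auto)
  thus ?thesis using mroot_le_iff[of d "mtr (mpow C d)" "spec_rad C"] assms(1) by simp
qed

lemma mtr_le_spec_rad: "mtr C \<le> spec_rad (C::('a::idem_semifield,'n::finite) sqmat)"
  using mtr_mpow_le_spec_rad_power[of 1 C] by (simp add: Suc_le_eq finite_UNIV_card_ge_0)

section \<open>Walks and the Kleene star\<close>

primrec walk_weight :: "('a::idem_semifield,'n) sqmat \<Rightarrow> (nat \<Rightarrow> 'n) \<Rightarrow> nat \<Rightarrow> 'a" where
  "walk_weight C f 0 = 1"
| "walk_weight C f (Suc m) = walk_weight C f m * C (f m) (f (Suc m))"

lemma walk_weight_cong: "(\<And>t. t \<le> m \<Longrightarrow> f t = g t) \<Longrightarrow> walk_weight C f m = walk_weight C g m"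
  by (induction m) auto

lemma walk_weight_add:
  "walk_weight C f (a + k) = walk_weight C f a * walk_weight C (\<lambda>t. f (a + t)) k"
  by (induction k) (auto simp: mult_ac)

lemma walk_weight_le_mpow:
  "walk_weight C f m \<le> mpow (C::('a::idem_semifield,'n::finite) sqmat) m (f 0) (f m)"
proof (induction m)
  case (Suc m)
  have "walk_weight C f (Suc m) \<le> mpow C m (f 0) (f m) * C (f m) (f (Suc m))"
    using Suc by (simp add: mult_right_mono)
  also have "\<dots> \<le> mpow C (Suc m) (f 0) (f (Suc m))"
    unfolding mpow.simps mmul_def by (rule member_le_sum) auto
  finally show ?case .
qed (simp add: mid_def)

lemma mpow_eq_walk_weight:
  fixes C :: "('a::idem_semifield,'n::finite) sqmat"
  assumes "mpow C m i j \<noteq> 0"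
  shows "\<exists>f. f 0 = i \<and> f m = j \<and> mpow C m i j = walk_weight C f m"
  using assms
proof (induction m arbitrary: j)
  case 0
  hence "i = j" by (simp add: mid_def split: if_splits)
  thus ?case by (intro exI[of _ "\<lambda>_. i"]) (simp add: mid_def)
next
  case (Suc m)
  obtain l where l: "mpow C (Suc m) i j = mpow C m i l * C l j"
    unfolding mpow.simps mmul_def using sum_attained[of UNIV "\<lambda>k. mpow C m i k * C k j"] by auto
  hence "mpow C m i l \<noteq> 0" using Suc.prems by auto
  then obtain f where f: "f 0 = i" "f m = l" "mpow C m i l = walk_weight C f m" using Suc.IH by blast
  define g where "g = f(Suc m := j)"
  have "walk_weight C g m = walk_weight C f m" by (rule walk_weight_cong) (auto simp: g_def)
  hence "mpow C (Suc m) i j = walk_weight C g (Suc m)" using l f by (simp add: g_def)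
  moreover have "g 0 = i" "g (Suc m) = j" using f by (auto simp: g_def)
  ultimately show ?case by blast
qed

lemma walk_revisits_vertex:
  "\<exists>a b. a < b \<and> b \<le> card (UNIV::'n::finite set) \<and> f a = (f b :: 'n)"
proof (rule ccontr)
  assume "\<not> ?thesis"
  hence "inj_on f {..card (UNIV::'n set)}" by (intro inj_onI) (metis atMost_iff linorder_neqE_nat)
  hence "card (f ` {..card (UNIV::'n set)}) = Suc (card (UNIV::'n set))" by (simp add: card_image)
  moreover have "card (f ` {..card (UNIV::'n set)}) \<le> card (UNIV::'n set)" by (rule card_mono) auto
  ultimately show False by simp
qed

lemma walk_weight_shortcut:
  assumes "a \<le> b" "b \<le> m" "f a = f b"
  shows "walk_weight C f m = walk_weight C (\<lambda>t. f (a + t)) (b - a)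
           * walk_weight C (\<lambda>t. if t \<le> a then f t else f (t + (b - a))) (m - (b - a))"
proof -
  let ?g = "\<lambda>t. if t \<le> a then f t else f (t + (b - a))"
  have "walk_weight C f m
      = walk_weight C f a * (walk_weight C (\<lambda>t. f (a + t)) (b - a) * walk_weight C (\<lambda>t. f (b + t)) (m - b))"
    using walk_weight_add[of C f a "m - a"] walk_weight_add[of C "\<lambda>t. f (a + t)" "b - a" "m - b"] assms
    by (simp add: add.assoc)
  moreover have "walk_weight C ?g (a + (m - b)) = walk_weight C f a * walk_weight C (\<lambda>t. f (b + t)) (m - b)"
  proof -
    have "walk_weight C ?g a = walk_weight C f a" by (rule walk_weight_cong) simp
    moreover have "walk_weight C (\<lambda>t. ?g (a + t)) (m - b) = walk_weight C (\<lambda>t. f (b + t)) (m - b)"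
      by (rule walk_weight_cong) (use assms in \<open>auto simp: add.commute\<close>)
    ultimately show ?thesis using walk_weight_add[of C ?g a "m - b"] by simp
  qed
  moreover have "a + (m - b) = m - (b - a)" using assms by simp
  ultimately show ?thesis by (simp add: mult_ac)
qed

lemma mpow_le_mstar_of_less:
  "p < card (UNIV::'n::finite set) \<Longrightarrow> mpow C p i j \<le> mstar (C::('a::idem_semifield,'n) sqmat) i j"
  unfolding mstar_def by (rule member_le_sum) auto

text \<open>If no closed walk has weight exceeding \<open>1\<close>, every walk can be shortened to length
  below \<open>n\<close> without losing weight.\<close>

lemma walk_weight_le_mstar:
  fixes C :: "('a::idem_semifield,'n::finite) sqmat"
  assumes "spec_rad C \<le> 1"
  shows "walk_weight C f m \<le> mstar C (f 0) (f m)"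
proof (induction m arbitrary: f rule: less_induct)
  case (less m)
  show ?case
  proof (cases "m < card (UNIV::'n set)")
    case True
    thus ?thesis using walk_weight_le_mpow mpow_le_mstar_of_less order_trans by blast
  next
    case False
    hence long: "card (UNIV::'n set) \<le> m" by simp
    obtain a b where ab: "a < b" "b \<le> card (UNIV::'n set)" "f a = f b"
      using walk_revisits_vertex by blast
    let ?g = "\<lambda>t. if t \<le> a then f t else f (t + (b - a))"
    have cycle: "walk_weight C (\<lambda>t. f (a + t)) (b - a) \<le> 1"
    proof -
      have "walk_weight C (\<lambda>t. f (a + t)) (b - a) \<le> mpow C (b - a) (f a) (f a)"
        using walk_weight_le_mpow[of C "\<lambda>t. f (a + t)" "b - a"] ab by simp
      also have "\<dots> \<le> mtr (mpow C (b - a))" unfolding mtr_def by (rule member_le_sum) auto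
      also have "\<dots> \<le> spec_rad C ^ (b - a)" by (rule mtr_mpow_le_spec_rad_power) (use ab in auto)
      also have "\<dots> \<le> 1" using power_mono[OF assms zero_le, of "b - a"] by simp
      finally show ?thesis .
    qed
    have "walk_weight C f m \<le> walk_weight C ?g (m - (b - a))"
      using walk_weight_shortcut[of a b m f C] ab long mult_right_mono[OF cycle zero_le] by simp
    also have "\<dots> \<le> mstar C (?g 0) (?g (m - (b - a)))" by (rule less) (use ab long in auto)
    also have "?g (m - (b - a)) = f m"
    proof (cases "m = b")
      case True
      thus ?thesis using ab by simp
    qed (use ab long in auto)
    finally show ?thesis by simp
  qed
qed

lemma mpow_le_mstar:
  fixes C :: "('a::idem_semifield,'n::finite) sqmat"
  assumes "spec_rad C \<le> 1"
  shows "mpow C m i j \<le> mstar C i j"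
proof (cases "mpow C m i j = 0")
  case False
  then obtain f where "f 0 = i" "f m = j" "mpow C m i j = walk_weight C f m"
    using mpow_eq_walk_weight by blast
  thus ?thesis using walk_weight_le_mstar[OF assms, of f m] by simp
qed simp

lemma mmul_mstar_le:
  fixes C :: "('a::idem_semifield,'n::finite) sqmat"
  assumes "spec_rad C \<le> 1"
  shows "mmul C (mstar C) i j \<le> mstar C i j"
proof -
  have "C i k * mstar C k j \<le> mstar C i j" for k
  proof -
    have "C i k * mpow C p k j \<le> mstar C i j" for p
    proof -
      have "C i k * mpow C p k j \<le> mpow C (Suc p) i j"
        unfolding mpow_Suc_left mmul_def by (rule member_le_sum) auto
      also have "\<dots> \<le> mstar C i j" by (rule mpow_le_mstar[OF assms])
      finally show ?thesis .
    qed
    moreover have "C i k * mstar C k j = (\<Sum>p<card (UNIV::'n set). C i k * mpow C p k j)"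
      by (simp add: mstar_def sum_distrib_left)
    ultimately show ?thesis by (simp add: sum_le_iff)
  qed
  thus ?thesis by (simp add: mmul_def sum_le_iff)
qed

lemma mvmul_mpow_le:
  fixes C :: "('a::idem_semifield,'n::finite) sqmat"
  assumes "\<And>i. mvmul C x i \<le> x i"
  shows "mvmul (mpow C p) x i \<le> x i"
proof (induction p arbitrary: i)
  case (Suc p)
  have "mvmul (mpow C (Suc p)) x i = mvmul (mpow C p) (mvmul C x) i" by (simp add: mvmul_mmul)
  also have "\<dots> \<le> mvmul (mpow C p) x i" by (rule mvmul_mono) (use assms in auto)
  also have "\<dots> \<le> x i" by (rule Suc)
  finally show ?case .
qed simp

lemma mvmul_mstar_eq:
  fixes C :: "('a::idem_semifield,'n::finite) sqmat"
  assumes "\<And>i. mvmul C x i \<le> x i"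
  shows "mvmul (mstar C) x = x"
proof (rule ext, rule antisym)
  fix i
  have "mpow C p i k * x k \<le> x i" for p k
    using member_le_sum[of k UNIV "\<lambda>k. mpow C p i k * x k"] mvmul_mpow_le[OF assms, of p i]
    unfolding mvmul_def by simp
  thus "mvmul (mstar C) x i \<le> x i"
    by (simp add: mvmul_def mstar_def sum_distrib_right sum_le_iff)
  have "mpow C 0 i i * x i \<le> mstar C i i * x i"
    by (intro mult_right_mono mpow_le_mstar_of_less) (simp_all add: finite_UNIV_card_ge_0)
  also have "\<dots> \<le> mvmul (mstar C) x i" unfolding mvmul_def by (rule member_le_sum) auto
  finally show "x i \<le> mvmul (mstar C) x i" by (simp add: mid_def)
qed

lemma mstar_nonzero:
  fixes C :: "('a::idem_semifield,'n::finite) sqmat"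
  assumes "\<And>i j. C i j \<noteq> 0"
  shows "mstar C i j \<noteq> 0"
proof -
  obtain p where p: "p < card (UNIV::'n set)" "mpow C p i j \<noteq> 0"
  proof (cases "i = j")
    case True
    thus ?thesis using that[of 0] by (simp add: mid_def finite_UNIV_card_ge_0)
  next
    case False
    have "card {i, j} \<le> card (UNIV::'n set)" by (rule card_mono) auto
    thus ?thesis using that[of 1] False assms by simp
  qed
  thus ?thesis using mpow_le_mstar_of_less[of p C i j] by auto
qed

lemma mvmul_regular:
  fixes M :: "('a::idem_semifield,'n::finite) sqmat"
  assumes "\<And>i j. M i j \<noteq> 0" and "u \<noteq> (\<lambda>_. 0)"
  shows "regular (mvmul M u)"
proof -
  obtain k where k: "u k \<noteq> 0" using assms(2) by auto
  show ?thesis unfolding regular_def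
  proof
    fix i
    have "M i k * u k \<le> mvmul M u i" unfolding mvmul_def by (rule member_le_sum) auto
    moreover have "M i k * u k \<noteq> 0" using assms(1) k by simp
    ultimately show "mvmul M u i \<noteq> 0" by auto
  qed
qed

section \<open>The approximation problem\<close>

definition conj_form :: "('a::idem_semifield,'n::finite) sqmat \<Rightarrow> ('a,'n) vect \<Rightarrow> 'a" where
  "conj_form B x = (\<Sum>i\<in>UNIV. \<Sum>j\<in>UNIV. inverse (x i) * B i j * x j)"

lemma mconj_vouter:
  assumes "regular (x::('a::idem_semifield,'n) vect)"
  shows "mconj (vouter x (vconj x)) = vouter x (vconj x)"
proof (intro ext)
  fix i j
  have nz: "x k \<noteq> 0" for k using assms by (simp add: regular_def)
  hence "inverse (x j * inverse (x i)) = x i * inverse (x j)"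
    by (simp add: inverse_mult_sf inverse_nonzero_sf inverse_inverse_sf mult.commute)
  thus "mconj (vouter x (vconj x)) i j = vouter x (vconj x) i j"
    unfolding mconj_def vouter_def vconj_def using nz by (simp add: inverse_nonzero_sf)
qed

lemma mdist_vouter_eq_conj_form:
  fixes A :: "('a::idem_semifield,'n::finite) sqmat"
  assumes "regular x"
  shows "mdist A (vouter x (vconj x)) = conj_form (madd A (mconj A)) x"
proof -
  have nz: "x k \<noteq> 0" for k using assms by (simp add: regular_def)
  have "mtr (mmul (mconj (vouter x (vconj x))) A) = (\<Sum>j\<in>UNIV. \<Sum>i\<in>UNIV. x j * inverse (x i) * A i j)"
    unfolding mconj_vouter[OF assms] unfolding mtr_def mmul_def vouter_def vconj_def using nz by simp
  also have "\<dots> = (\<Sum>i\<in>UNIV. \<Sum>j\<in>UNIV. inverse (x i) * A i j * x j)"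
    by (subst sum.swap) (simp add: mult_ac)
  finally have "mtr (mmul (mconj (vouter x (vconj x))) A) = \<dots>" .
  moreover have "mtr (mmul (mconj A) (vouter x (vconj x)))
      = (\<Sum>i\<in>UNIV. \<Sum>j\<in>UNIV. inverse (x i) * mconj A i j * x j)"
    unfolding mtr_def mmul_def vouter_def vconj_def using nz by (simp add: mult_ac)
  ultimately show ?thesis
    unfolding mdist_def conj_form_def madd_def by (simp add: distrib_left distrib_right sum.distrib)
qed

lemma mpow_scaled_le_conj_form_power:
  fixes B :: "('a::idem_semifield,'n::finite) sqmat"
  assumes "regular x"
  shows "inverse (x i) * mpow B k i j * x j \<le> conj_form B x ^ k"
proof (induction k arbitrary: j)
  case 0
  show ?case using assms by (simp add: mid_def left_inverse_sf regular_def)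
next
  case (Suc k)
  have nz: "x l \<noteq> 0" for l using assms by (simp add: regular_def)
  have "inverse (x i) * (mpow B k i l * B l j) * x j \<le> conj_form B x ^ Suc k" for l
  proof -
    have "inverse (x i) * (mpow B k i l * B l j) * x j
        = (inverse (x i) * mpow B k i l) * (x l * inverse (x l)) * (B l j * x j)"
      using right_inverse_sf[OF nz[of l]] by (simp add: mult_ac)
    also have "\<dots> = (inverse (x i) * mpow B k i l * x l) * (inverse (x l) * B l j * x j)"
      by (simp add: mult_ac)
    also have "\<dots> \<le> conj_form B x ^ k * conj_form B x"
    proof (rule mult_mono[OF Suc _ zero_le zero_le])
      have "inverse (x l) * B l j * x j \<le> (\<Sum>j\<in>UNIV. inverse (x l) * B l j * x j)"
        by (rule member_le_sum) auto
      also have "\<dots> \<le> conj_form B x"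
        unfolding conj_form_def by (rule member_le_sum[where f = "\<lambda>l. \<Sum>j\<in>UNIV. _ l j"]) auto
      finally show "inverse (x l) * B l j * x j \<le> conj_form B x" .
    qed
    finally show ?thesis by (simp add: mult.commute)
  qed
  thus ?case by (simp add: mmul_def sum_distrib_left sum_distrib_right sum_le_iff)
qed

lemma spec_rad_le_conj_form:
  fixes B :: "('a::idem_semifield,'n::finite) sqmat"
  assumes "regular x"
  shows "spec_rad B \<le> conj_form B x"
  unfolding spec_rad_def sum_le_iff[OF finite_atLeastAtMost]
proof
  fix k assume k: "k \<in> {1..card (UNIV::'n set)}"
  have "mpow B k i i \<le> conj_form B x ^ k" for i
  proof -
    have "inverse (x i) * mpow B k i i * x i = mpow B k i i * (inverse (x i) * x i)"
      by (simp only: mult_ac)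
    also have "\<dots> = mpow B k i i" using assms by (simp add: regular_def left_inverse_sf)
    finally show ?thesis using mpow_scaled_le_conj_form_power[OF assms, where B = B and i = i and k = k and j = i]
      by simp
  qed
  hence "mtr (mpow B k) \<le> conj_form B x ^ k" by (simp add: mtr_def sum_le_iff)
  thus "mroot k (mtr (mpow B k)) \<le> conj_form B x"
    using mroot_le_iff[of k "mtr (mpow B k)" "conj_form B x"] k by simp
qed

lemma conj_form_le_iff:
  fixes B :: "('a::idem_semifield,'n::finite) sqmat"
  assumes "regular x" and "\<mu> \<noteq> 0"
  shows "conj_form B x \<le> \<mu> \<longleftrightarrow> (\<forall>i. mvmul (msmul (inverse \<mu>) B) x i \<le> x i)"
proof -
  have nz: "x k \<noteq> 0" for k using assms by (simp add: regular_def)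
  have entry: "inverse (x i) * (B i j * x j) \<le> \<mu> \<longleftrightarrow> inverse \<mu> * (B i j * x j) \<le> x i" for i j
    unfolding le_mult_iff_inverse_le[OF nz[of i], symmetric] le_mult_iff_inverse_le[OF assms(2), symmetric]
    by (simp only: mult.commute)
  show ?thesis
    unfolding conj_form_def mvmul_def msmul_def by (simp add: sum_le_iff entry mult.assoc)
qed

lemma regular_subeigenvectors_eq_mstar_image:
  fixes C :: "('a::idem_semifield,'n::finite) sqmat"
  assumes pos: "\<And>i j. C i j \<noteq> 0" and rad: "spec_rad C \<le> 1"
  shows "{x. regular x \<and> (\<forall>i. mvmul C x i \<le> x i)} = {mvmul (mstar C) u | u. u \<noteq> (\<lambda>_. 0)}"
proof (intro set_eqI iffI)
  fix x
  assume "x \<in> {x. regular x \<and> (\<forall>i. mvmul C x i \<le> x i)}"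
  hence "regular x" "mvmul (mstar C) x = x" using mvmul_mstar_eq by auto
  moreover have "x \<noteq> (\<lambda>_. 0)" using \<open>regular x\<close> by (auto simp: regular_def)
  ultimately show "x \<in> {mvmul (mstar C) u | u. u \<noteq> (\<lambda>_. 0)}"
    unfolding mem_Collect_eq by (intro exI[of _ x]) simp
next
  fix x
  assume "x \<in> {mvmul (mstar C) u | u. u \<noteq> (\<lambda>_. 0)}"
  then obtain u where u: "u \<noteq> (\<lambda>_. 0)" "x = mvmul (mstar C) u" by blast
  have "mvmul C x i \<le> x i" for i
    unfolding u(2) mvmul_mmul[symmetric] by (rule mvmul_mono) (use mmul_mstar_le[OF rad] in auto)
  moreover have "regular x" unfolding u(2) by (rule mvmul_regular[OF mstar_nonzero[OF pos] u(1)])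
  ultimately show "x \<in> {x. regular x \<and> (\<forall>i. mvmul C x i \<le> x i)}" by simp
qed

theorem theorem1:
  fixes A :: "('a::idem_semifield, 'n::finite) sqmat"
  defines "B \<equiv> madd A (mconj A)"
  defines "\<mu> \<equiv> spec_rad B"
  defines "B\<^sub>\<mu> \<equiv> msmul (inverse \<mu>) B"
  assumes B_nz: "\<forall>i j. B i j \<noteq> 0"
  shows "(\<forall>x. regular x \<longrightarrow> \<mu> \<le> mdist A (vouter x (vconj x)))
    \<and> (\<exists>x. regular x \<and> mdist A (vouter x (vconj x)) = \<mu>)
    \<and> {x. regular x \<and> mdist A (vouter x (vconj x)) = \<mu>}
        = {mvmul (mstar B\<^sub>\<mu>) u | u. u \<noteq> (\<lambda>_. 0)}"
proof -
  fix i :: 'n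
  have "B i i \<le> mtr B" unfolding mtr_def by (rule member_le_sum) auto
  also have "\<dots> \<le> \<mu>" unfolding \<mu>_def by (rule mtr_le_spec_rad)
  finally have \<mu>_nz: "\<mu> \<noteq> 0" using B_nz by auto
  have B\<^sub>\<mu>_pos: "\<And>i j. B\<^sub>\<mu> i j \<noteq> 0"
    using B_nz \<mu>_nz by (simp add: B\<^sub>\<mu>_def msmul_def inverse_nonzero_sf)
  have "spec_rad B\<^sub>\<mu> \<le> 1"
    unfolding B\<^sub>\<mu>_def spec_rad_msmul using \<mu>_nz by (simp add: \<mu>_def left_inverse_sf)
  note solutions = regular_subeigenvectors_eq_mstar_image[OF B\<^sub>\<mu>_pos this]
  have "mdist A (vouter x (vconj x)) = \<mu> \<longleftrightarrow> (\<forall>i. mvmul B\<^sub>\<mu> x i \<le> x i)"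
    if "regular x" for x
    using that spec_rad_le_conj_form[OF that, of B] conj_form_le_iff[OF that \<mu>_nz, of B]
    by (auto simp: mdist_vouter_eq_conj_form B_def \<mu>_def B\<^sub>\<mu>_def)
  hence optimal_set: "{x. regular x \<and> mdist A (vouter x (vconj x)) = \<mu>}
      = {mvmul (mstar B\<^sub>\<mu>) u | u. u \<noteq> (\<lambda>_. 0)}"
    using solutions by blast
  moreover have "mvmul (mstar B\<^sub>\<mu>) (\<lambda>_. 1) \<in> {x. regular x \<and> mdist A (vouter x (vconj x)) = \<mu>}"
    unfolding optimal_set by (auto simp: fun_eq_iff)
  moreover have "\<mu> \<le> mdist A (vouter x (vconj x))" if "regular x" for x
    using spec_rad_le_conj_form[OF that] by (simp add: mdist_vouter_eq_conj_form[OF that] B_def \<mu>_def)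
  ultimately show ?thesis by blast
qed

end
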